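(* Let $A>0$ and let $g\in C(\mathbb R;\mathbb R)$ be bounded with $g>0$ on $\mathbb R$ and $\int_{\mathbb R}(1+|x|)g(x)\,dx<\infty$. Then there is $K>1$ such that for all $v,w\in\mathcal X(\mathbb R)$, $$\tfrac1K d_g(v,w)\le d_{\mathcal X}(v,w)\le Kd_A(v,w)\le K^2d_g(v,w).$$ Moreover $d_{\mathcal X}(v,w)\le d_\infty(v,w)$ for all $v,w$, but $d_{\mathcal X}$ and $d_\infty$ are not equivalent: with $\chi(x)=\max(1-|x|,0)$ and $v_n(x)=e^{i\chi(n+x/n)}$, one has $d_{\mathcal X}(v_n,1)\to0$ while $d_\infty(v_n,1)\to|e^{i}-1|\neq0$.
   Context: $r_0>0$; $\mathcal X(\mathbb R)=\{v\in H^1_{loc}(\mathbb R;\mathbb C):v'\in L^2,|v|^2-r_0^2\in L^2\}$. For $v,w\in\mathcal X(\mathbb R)$ and writing $\Delta(v,w)=\int|v'-w'|^2dx+\int(|v|-|w|)^2dx$: $d_{\mathcal X}(v,w)^2=\Delta+|v(0)-w(0)|^2$; $d_\infty(v,w)^2=\Delta+\sup_{\mathbb R}|v-w|^2$; $d_A(v,w)^2=\Delta+\sup_{[-A,A]}|v-w|^2$; $d_g(v,w)^2=\Delta+\int g|v-w|^2dx$. (In the counterexample take $r_0=1$.) *)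

theory Defs
  imports "HOL-Analysis.Analysis"
begin

text \<open>H^1_loc on the real line: represented by the (absolutely) continuous representative
  v together with a locally integrable weak derivative v', i.e. v b - v a = int_a^b v'.\<close>
definition has_weak_deriv :: "(real \<Rightarrow> complex) \<Rightarrow> (real \<Rightarrow> complex) \<Rightarrow> bool" where
  "has_weak_deriv v v' \<longleftrightarrow>
     (\<forall>a b. a \<le> b \<longrightarrow> set_integrable lborel {a..b} v' \<and>
        v b - v a = (LINT x:{a..b}|lborel. v' x))"

definition XR :: "real \<Rightarrow> (real \<Rightarrow> complex) set" where
  "XR r0 = {v. \<exists>v'. has_weak_deriv v v' \<and> v' \<in> borel_measurable lborel \<and>
        integrable lborel (\<lambda>x. (cmod (v' x))\<^sup>2) \<and>
        integrable lborel (\<lambda>x. ((cmod (v x))\<^sup>2 - r0\<^sup>2)\<^sup>2)}"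

text \<open>The weak derivative (unique up to null sets, which does not affect the integrals below).\<close>
definition wderiv :: "(real \<Rightarrow> complex) \<Rightarrow> real \<Rightarrow> complex" where
  "wderiv v = (SOME v'. has_weak_deriv v v' \<and> v' \<in> borel_measurable lborel \<and>
        integrable lborel (\<lambda>x. (cmod (v' x))\<^sup>2))"

definition Delta :: "(real \<Rightarrow> complex) \<Rightarrow> (real \<Rightarrow> complex) \<Rightarrow> real" where
  "Delta v w = (LINT x|lborel. (cmod (wderiv v x - wderiv w x))\<^sup>2)
             + (LINT x|lborel. (cmod (v x) - cmod (w x))\<^sup>2)"

definition dX :: "(real \<Rightarrow> complex) \<Rightarrow> (real \<Rightarrow> complex) \<Rightarrow> real" where
  "dX v w = sqrt (Delta v w + (cmod (v 0 - w 0))\<^sup>2)"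

definition dinf :: "(real \<Rightarrow> complex) \<Rightarrow> (real \<Rightarrow> complex) \<Rightarrow> real" where
  "dinf v w = sqrt (Delta v w + (SUP x. (cmod (v x - w x))\<^sup>2))"

definition dA :: "real \<Rightarrow> (real \<Rightarrow> complex) \<Rightarrow> (real \<Rightarrow> complex) \<Rightarrow> real" where
  "dA A v w = sqrt (Delta v w + (SUP x\<in>{-A..A}. (cmod (v x - w x))\<^sup>2))"

definition dg :: "(real \<Rightarrow> real) \<Rightarrow> (real \<Rightarrow> complex) \<Rightarrow> (real \<Rightarrow> complex) \<Rightarrow> real" where
  "dg g v w = sqrt (Delta v w + (LINT x|lborel. g x * (cmod (v x - w x))\<^sup>2))"

definition chi :: "real \<Rightarrow> real" where
  "chi x = max (1 - \<bar>x\<bar>) 0"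

end

theory Submission
  imports Defs
begin

(*
  Write u = v - w. The weak derivative of u has squared L^2 norm at most Delta(v, w), so by
  Cauchy-Schwarz |u(x) - u(y)|^2 <= |x - y| Delta, hence |u(x)|^2 <= 2 |u(y)|^2 + 2 |x - y| Delta.
  Taking y = 0 and integrating in x against g bounds int g |u|^2 by |u(0)|^2 and Delta; fixing
  x in [-A, A] and integrating in y over [-A, A] against g >= min g > 0 bounds the supremum of
  |u|^2 on [-A, A] by int g |u|^2 and Delta; and |u(0)|^2 lies below every supremum.

  In the counterexample the phase of v_n rises from 0 to 1 and falls back over an interval of
  length 2n centred at -n^2, so the derivative has squared L^2 norm 2/n while v_n(0) = 1 and
  sup |v_n - 1| = |e^i - 1|.
*)

section \<open>Weak derivatives in $L^2$\<close>

definition energy :: "(real \<Rightarrow> complex) \<Rightarrow> real" where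
  "energy d = (LINT t|lborel. (cmod (d t))\<^sup>2)"

lemma energy_nonneg: "0 \<le> energy d"
  unfolding energy_def by (rule integral_nonneg_AE) auto

lemma Cauchy_Schwarz_integral:
  fixes f g :: "'a \<Rightarrow> real"
  assumes [measurable]: "f \<in> borel_measurable M" "g \<in> borel_measurable M"
    and f2: "integrable M (\<lambda>x. (f x)\<^sup>2)" and g2: "integrable M (\<lambda>x. (g x)\<^sup>2)"
  shows "(LINT x|M. \<bar>f x * g x\<bar>)\<^sup>2 \<le> (LINT x|M. (f x)\<^sup>2) * (LINT x|M. (g x)\<^sup>2)"
proof -
  have bound: "\<bar>f x * g x\<bar> \<le> ((f x)\<^sup>2 + (g x)\<^sup>2) / 2" for x
  proof -
    have "0 \<le> (\<bar>f x\<bar> - \<bar>g x\<bar>)\<^sup>2"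
      by simp
    then show ?thesis
      by (simp add: power2_eq_square abs_mult algebra_simps)
  qed
  have fg: "integrable M (\<lambda>x. \<bar>f x * g x\<bar>)"
    by (rule Bochner_Integration.integrable_bound[of _ "\<lambda>x. ((f x)\<^sup>2 + (g x)\<^sup>2) / 2"])
       (use f2 g2 bound in auto)
  have "(\<integral>\<^sup>+x. ennreal \<bar>f x\<bar> * ennreal \<bar>g x\<bar> \<partial>M)\<^sup>2
      \<le> (\<integral>\<^sup>+x. (ennreal \<bar>f x\<bar>)\<^sup>2 \<partial>M) * (\<integral>\<^sup>+x. (ennreal \<bar>g x\<bar>)\<^sup>2 \<partial>M)"
    by (rule Cauchy_Schwarz_nn_integral) auto
  also have "(\<lambda>x. ennreal \<bar>f x\<bar> * ennreal \<bar>g x\<bar>) = (\<lambda>x. ennreal \<bar>f x * g x\<bar>)"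
    by (auto simp: ennreal_mult' abs_mult)
  also have "(\<lambda>x. (ennreal \<bar>f x\<bar>)\<^sup>2) = (\<lambda>x. ennreal ((f x)\<^sup>2))"
    by (auto simp: ennreal_power)
  also have "(\<lambda>x. (ennreal \<bar>g x\<bar>)\<^sup>2) = (\<lambda>x. ennreal ((g x)\<^sup>2))"
    by (auto simp: ennreal_power)
  also have "(\<integral>\<^sup>+x. ennreal \<bar>f x * g x\<bar> \<partial>M) = ennreal (LINT x|M. \<bar>f x * g x\<bar>)"
    by (rule nn_integral_eq_integral[OF fg]) auto
  also have "(\<integral>\<^sup>+x. ennreal ((f x)\<^sup>2) \<partial>M) = ennreal (LINT x|M. (f x)\<^sup>2)"
    by (rule nn_integral_eq_integral[OF f2]) auto
  also have "(\<integral>\<^sup>+x. ennreal ((g x)\<^sup>2) \<partial>M) = ennreal (LINT x|M. (g x)\<^sup>2)"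
    by (rule nn_integral_eq_integral[OF g2]) auto
  finally have "ennreal ((LINT x|M. \<bar>f x * g x\<bar>)\<^sup>2)
      \<le> ennreal ((LINT x|M. (f x)\<^sup>2) * (LINT x|M. (g x)\<^sup>2))"
    by (simp add: ennreal_power ennreal_mult' integral_nonneg_AE)
  then show ?thesis
    by (subst (asm) ennreal_le_iff) (auto intro!: mult_nonneg_nonneg integral_nonneg_AE)
qed

lemma has_weak_deriv_diff:
  assumes "has_weak_deriv v v'" "has_weak_deriv w w'"
  shows "has_weak_deriv (\<lambda>x. v x - w x) (\<lambda>x. v' x - w' x)"
  unfolding has_weak_deriv_def
proof (intro allI impI conjI)
  fix a b :: real assume "a \<le> b"
  then have v: "set_integrable lborel {a..b} v'" "v b - v a = (LINT x:{a..b}|lborel. v' x)"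
    and w: "set_integrable lborel {a..b} w'" "w b - w a = (LINT x:{a..b}|lborel. w' x)"
    using assms unfolding has_weak_deriv_def by auto
  show "set_integrable lborel {a..b} (\<lambda>x. v' x - w' x)"
    using v w by simp
  show "v b - w b - (v a - w a) = (LINT x:{a..b}|lborel. v' x - w' x)"
    unfolding set_integral_diff(2)[OF v(1) w(1)] v(2)[symmetric] w(2)[symmetric] by simp
qed

lemma has_weak_deriv_const: "has_weak_deriv (\<lambda>_. c) (\<lambda>_. 0)"
  unfolding has_weak_deriv_def set_integrable_def set_lebesgue_integral_def by simp

lemma integrable_AE_zero_if_interval_integrals_zero:
  fixes e :: "real \<Rightarrow> 'a::{banach, second_countable_topology}"
  assumes e_int: "integrable lborel e" and total: "(LINT x|lborel. e x) = 0"
    and interval: "\<And>a b. (LINT x:{a..b}|lborel. e x) = 0"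
  shows "AE x in lborel. e x = 0"
proof (rule sigma_finite_measure.density_zero[OF sigma_finite_lborel e_int])
  have stable: "Int_stable (range (\<lambda>(a, b). {a..b::real}))"
    by (fastforce simp: Int_stable_def)
  have closed: "range (\<lambda>(a, b). {a..b::real}) \<subseteq> Pow UNIV"
    by simp
  fix A :: "real set" assume "A \<in> sets lborel"
  then have "A \<in> sigma_sets UNIV (range (\<lambda>(a, b). {a..b}))"
    by (simp add: borel_eq_atLeastAtMost)
  with stable closed show "(LINT x:A|lborel. e x) = 0"
  proof (induction rule: sigma_sets_induct_disjoint)
    case (compl A)
    then have [measurable]: "A \<in> sets borel"
      by (simp add: borel_eq_atLeastAtMost)
    have "(LINT x:UNIV - A|lborel. e x) = (LINT x|lborel. e x - indicator A x *\<^sub>R e x)"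
      unfolding set_lebesgue_integral_def
      by (intro Bochner_Integration.integral_cong) (auto simp: indicator_def)
    also have "\<dots> = (LINT x|lborel. e x) - (LINT x:A|lborel. e x)"
      unfolding set_lebesgue_integral_def using e_int by (simp add: integrable_mult_indicator)
    finally show ?case
      using compl.IH total by simp
  next
    case (union A)
    then have [measurable]: "A i \<in> sets borel" for i
      by (auto simp: borel_eq_atLeastAtMost)
    have "set_integrable lborel (\<Union>i. A i) e"
      unfolding set_integrable_def using e_int by (intro integrable_mult_indicator) auto
    then show ?case
      using union.IH union.hyps(1)
      by (subst lebesgue_integral_countable_add) (auto simp: disjoint_family_on_def)
  qed (use interval in \<open>auto simp: set_lebesgue_integral_def\<close>)
qed

lemma AE_zero_if_interval_integrals_zero:
  fixes e :: "real \<Rightarrow> 'a::{banach, second_countable_topology}"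
  assumes e_int: "\<And>a b. a \<le> b \<Longrightarrow> set_integrable lborel {a..b} e"
    and e_zero: "\<And>a b. a \<le> b \<Longrightarrow> (LINT x:{a..b}|lborel. e x) = 0"
  shows "AE x in lborel. e x = 0"
proof -
  have truncated: "AE x in lborel. indicator {-real n..real n} x *\<^sub>R e x = 0" for n :: nat
  proof (rule integrable_AE_zero_if_interval_integrals_zero)
    show "integrable lborel (\<lambda>x. indicator {-real n..real n} x *\<^sub>R e x)"
      using e_int unfolding set_integrable_def by simp
    show "(LINT x|lborel. indicator {-real n..real n} x *\<^sub>R e x) = 0"
      using e_zero[of "-real n" "real n"] unfolding set_lebesgue_integral_def by simp
    fix a b :: real
    have "(LINT x:{a..b}|lborel. indicator {-real n..real n} x *\<^sub>R e x)
        = (LINT x:{max a (-real n)..min b (real n)}|lborel. e x)"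
      unfolding set_lebesgue_integral_def
      by (intro Bochner_Integration.integral_cong) (auto simp: indicator_def)
    then show "(LINT x:{a..b}|lborel. indicator {-real n..real n} x *\<^sub>R e x) = 0"
      using e_zero[of "max a (-real n)" "min b (real n)"]
      by (cases "max a (-real n) \<le> min b (real n)") (auto simp: set_lebesgue_integral_def)
  qed
  have "AE x in lborel. \<forall>n::nat. indicator {-real n..real n} x *\<^sub>R e x = 0"
    using truncated by (simp only: AE_all_countable) blast
  then show ?thesis
  proof eventually_elim
    case (elim x)
    obtain n :: nat where "\<bar>x\<bar> \<le> real n"
      using real_arch_simple by blast
    then show ?case
      using elim[rule_format, of n] by (auto simp: indicator_def)
  qed
qed

lemma has_weak_deriv_unique:
  assumes f: "has_weak_deriv v f" and h: "has_weak_deriv v h"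
  shows "AE x in lborel. f x = h x"
proof -
  have "AE x in lborel. f x - h x = 0"
  proof (rule AE_zero_if_interval_integrals_zero)
    fix a b :: real assume "a \<le> b"
    then have "set_integrable lborel {a..b} f" "set_integrable lborel {a..b} h"
      "v b - v a = (LINT x:{a..b}|lborel. f x)" "v b - v a = (LINT x:{a..b}|lborel. h x)"
      using f h unfolding has_weak_deriv_def by auto
    then show "set_integrable lborel {a..b} (\<lambda>x. f x - h x)"
      and "(LINT x:{a..b}|lborel. f x - h x) = 0"
      by (simp_all add: set_integral_diff)
  qed
  then show ?thesis by simp
qed

lemma integral_ge_on_unit_interval:
  fixes h :: "real \<Rightarrow> real"
  assumes h_int: "integrable lborel h" and h_nonneg: "\<And>y. 0 \<le> h y"
    and h_ge: "\<And>y. y \<in> {x..x+1} \<Longrightarrow> k \<le> h y"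
  shows "k \<le> (LINT y|lborel. h y)"
proof -
  have "k = (LINT y|lborel. indicator {x..x+1} y * k)"
    by simp
  also have "\<dots> \<le> (LINT y|lborel. h y)"
  proof (rule integral_mono[OF _ h_int])
    have "integrable lborel (indicator {x..x+1} :: real \<Rightarrow> real)"
      by (simp add: integrable_indicator_iff)
    then show "integrable lborel (\<lambda>y. indicator {x..x+1} y * k)"
      by simp
  qed (use h_nonneg h_ge in \<open>auto simp: indicator_def\<close>)
  finally show ?thesis .
qed

context
  fixes u d :: "real \<Rightarrow> complex"
  assumes u: "has_weak_deriv u d" and d_meas [measurable]: "d \<in> borel_measurable lborel"
    and d_L2: "integrable lborel (\<lambda>t. (cmod (d t))\<^sup>2)"
begin

lemma sq_increment_le_energy: "(cmod (u y - u x))\<^sup>2 \<le> \<bar>y - x\<bar> * energy d"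
proof -
  have ordered: "(cmod (u y - u x))\<^sup>2 \<le> (y - x) * energy d" if "x \<le> y" for x y
  proof -
    define f where "f t = indicator {x..y} t * cmod (d t)" for t
    define g :: "real \<Rightarrow> real" where "g t = indicator {x..y} t" for t
    have [measurable]: "f \<in> borel_measurable lborel" "g \<in> borel_measurable lborel"
      unfolding f_def g_def by measurable
    have f2: "(\<lambda>t. (f t)\<^sup>2) = (\<lambda>t. indicator {x..y} t * (cmod (d t))\<^sup>2)"
      and g2: "(\<lambda>t. (g t)\<^sup>2) = indicator {x..y}"
      and fg: "(\<lambda>t. \<bar>f t * g t\<bar>) = (\<lambda>t. indicator {x..y} t * cmod (d t))"
      by (auto simp: f_def g_def indicator_def)
    have f2_int: "integrable lborel (\<lambda>t. (f t)\<^sup>2)"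
      unfolding f2 using integrable_mult_indicator[OF _ d_L2, of "{x..y}"] by simp
    have g2_int: "integrable lborel (\<lambda>t. (g t)\<^sup>2)"
      unfolding g2 by (simp add: integrable_indicator_iff emeasure_lborel_Icc_eq)
    have "u y - u x = (LINT t:{x..y}|lborel. d t)"
      and d_int: "set_integrable lborel {x..y} d"
      using u \<open>x \<le> y\<close> unfolding has_weak_deriv_def by auto
    then have "cmod (u y - u x) \<le> (LINT t:{x..y}|lborel. cmod (d t))"
      using set_integral_norm_bound[OF d_int] by simp
    also have "\<dots> = (LINT t|lborel. \<bar>f t * g t\<bar>)"
      unfolding fg set_lebesgue_integral_def by simp
    finally have "cmod (u y - u x) \<le> (LINT t|lborel. \<bar>f t * g t\<bar>)" .
    then have "(cmod (u y - u x))\<^sup>2 \<le> (LINT t|lborel. \<bar>f t * g t\<bar>)\<^sup>2"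
      by (simp add: power_mono)
    also have "\<dots> \<le> (LINT t|lborel. (f t)\<^sup>2) * (LINT t|lborel. (g t)\<^sup>2)"
      by (rule Cauchy_Schwarz_integral[OF _ _ f2_int g2_int]) auto
    also have "\<dots> \<le> energy d * (y - x)"
    proof (rule mult_mono)
      show "(LINT t|lborel. (f t)\<^sup>2) \<le> energy d"
        unfolding energy_def f2
        by (rule integral_mono[OF f2_int[unfolded f2] d_L2]) (auto simp: indicator_def)
      show "(LINT t|lborel. (g t)\<^sup>2) \<le> y - x"
        unfolding g2 using \<open>x \<le> y\<close> by simp
    qed (auto simp: energy_nonneg)
    finally show ?thesis by (simp add: mult.commute)
  qed
  show ?thesis
    using ordered[of x y] ordered[of y x] by (cases "x \<le> y") (auto simp: norm_minus_commute)
qed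

lemma continuous_on_if_L2_weak_deriv: "continuous_on UNIV u"
proof -
  have "isCont u x" for x
  proof -
    have bound: "norm (u y - u x) \<le> sqrt (\<bar>y - x\<bar> * energy d)" for y
      using sq_increment_le_energy[of y x] by (simp add: real_le_rsqrt)
    have "((\<lambda>y. sqrt (\<bar>y - x\<bar> * energy d)) \<longlongrightarrow> sqrt (\<bar>x - x\<bar> * energy d)) (at x)"
      by (intro tendsto_intros)
    then have "((\<lambda>y. sqrt (\<bar>y - x\<bar> * energy d)) \<longlongrightarrow> 0) (at x)"
      by simp
    then have "((\<lambda>y. u y - u x) \<longlongrightarrow> 0) (at x)"
      by (rule Lim_null_comparison[rotated]) (use bound in auto)
    then show ?thesis
      unfolding isCont_def by (simp add: LIM_zero_iff)
  qed
  then show ?thesis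
    by (simp add: continuous_at_imp_continuous_on)
qed

lemma sq_norm_le_shifted: "(cmod (u x))\<^sup>2 \<le> 2 * (cmod (u y))\<^sup>2 + 2 * \<bar>x - y\<bar> * energy d"
proof -
  have "(cmod (u x))\<^sup>2 \<le> (cmod (u y) + cmod (u x - u y))\<^sup>2"
    by (intro power_mono) (auto simp: norm_triangle_sub)
  also have "\<dots> \<le> 2 * (cmod (u y))\<^sup>2 + 2 * (cmod (u x - u y))\<^sup>2"
    using sum_squares_bound[of "cmod (u y)" "cmod (u x - u y)"] by (simp add: power2_sum)
  also have "(cmod (u x - u y))\<^sup>2 \<le> \<bar>x - y\<bar> * energy d"
    by (rule sq_increment_le_energy)
  finally show ?thesis by simp
qed

lemma borel_measurable_if_L2_weak_deriv: "u \<in> borel_measurable borel"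
  using continuous_on_if_L2_weak_deriv by (rule borel_measurable_continuous_onI)

lemma norm_ge_on_unit_interval:
  assumes "y \<in> {x..x+1}"
  shows "cmod (u x) - sqrt (energy d) \<le> cmod (u y)"
proof -
  have "\<bar>y - x\<bar> * energy d \<le> 1 * energy d"
    using assms energy_nonneg[of d] by (intro mult_right_mono) auto
  then have "cmod (u y - u x) \<le> sqrt (energy d)"
    using sq_increment_le_energy[of y x] by (simp add: real_le_rsqrt)
  then show ?thesis
    using norm_triangle_sub[of "u x" "u y"] by (simp add: norm_minus_commute)
qed

lemma bounded_if_potential_integrable:
  assumes "integrable lborel (\<lambda>x. ((cmod (u x))\<^sup>2 - r\<^sup>2)\<^sup>2)"
  shows "\<exists>B. \<forall>x. cmod (u x) \<le> B"
proof -
  define I where "I = (LINT x|lborel. ((cmod (u x))\<^sup>2 - r\<^sup>2)\<^sup>2)"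
  have I_nonneg: "0 \<le> I"
    unfolding I_def by (rule integral_nonneg_AE) auto
  have "cmod (u x) - sqrt (energy d) \<le> sqrt (r\<^sup>2 + sqrt I)" (is "?c \<le> _") for x
  proof (cases "?c \<le> \<bar>r\<bar>")
    case True
    have "\<bar>r\<bar> \<le> sqrt (r\<^sup>2 + sqrt I)"
      using I_nonneg by (intro real_le_rsqrt) auto
    with True show ?thesis
      by linarith
  next
    case False
    have "(?c\<^sup>2 - r\<^sup>2)\<^sup>2 \<le> ((cmod (u y))\<^sup>2 - r\<^sup>2)\<^sup>2" if "y \<in> {x..x+1}" for y
    proof -
      have "\<bar>r\<bar> \<le> ?c" "?c \<le> cmod (u y)"
        using False norm_ge_on_unit_interval[OF that] by auto
      then have "r\<^sup>2 \<le> ?c\<^sup>2" "?c\<^sup>2 \<le> (cmod (u y))\<^sup>2"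
        by (metis abs_le_square_iff abs_of_nonneg abs_ge_zero order_trans power_mono norm_ge_zero)+
      then show ?thesis
        by (intro power_mono) auto
    qed
    then have "(?c\<^sup>2 - r\<^sup>2)\<^sup>2 \<le> I"
      unfolding I_def using assms by (intro integral_ge_on_unit_interval) auto
    then have "?c\<^sup>2 - r\<^sup>2 \<le> sqrt I"
      by (rule real_le_rsqrt)
    then show ?thesis
      by (intro real_le_rsqrt) auto
  qed
  then show ?thesis
    by (metis add.commute diff_le_eq)
qed

lemma weighted_sq_integral_le:
  fixes g :: "real \<Rightarrow> real"
  assumes [measurable]: "g \<in> borel_measurable borel" and g_nonneg: "\<And>x. 0 \<le> g x"
    and g_int: "integrable lborel g" and xg_int: "integrable lborel (\<lambda>x. \<bar>x\<bar> * g x)"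
  shows "integrable lborel (\<lambda>x. g x * (cmod (u x))\<^sup>2)"
    and "(LINT x|lborel. g x * (cmod (u x))\<^sup>2)
      \<le> 2 * (LINT x|lborel. g x) * (cmod (u 0))\<^sup>2 + 2 * (LINT x|lborel. \<bar>x\<bar> * g x) * energy d"
proof -
  note [measurable] = borel_measurable_if_L2_weak_deriv
  define majorant where
    "majorant x = 2 * (cmod (u 0))\<^sup>2 * g x + 2 * energy d * (\<bar>x\<bar> * g x)" for x
  have majorant_int: "integrable lborel majorant"
    unfolding majorant_def using g_int xg_int by simp
  have le: "g x * (cmod (u x))\<^sup>2 \<le> majorant x" for x
  proof -
    have "g x * (cmod (u x))\<^sup>2 \<le> g x * (2 * (cmod (u 0))\<^sup>2 + 2 * \<bar>x\<bar> * energy d)"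
      using sq_norm_le_shifted[of x 0] g_nonneg by (simp add: mult_left_mono)
    then show ?thesis
      unfolding majorant_def by (simp add: algebra_simps)
  qed
  show int: "integrable lborel (\<lambda>x. g x * (cmod (u x))\<^sup>2)"
    using le g_nonneg
    by (intro Bochner_Integration.integrable_bound[OF majorant_int] AE_I2)
       (auto intro: order_trans[OF _ abs_ge_self])
  have "(LINT x|lborel. g x * (cmod (u x))\<^sup>2) \<le> (LINT x|lborel. majorant x)"
    using int majorant_int le by (rule integral_mono)
  also have "\<dots> = 2 * (LINT x|lborel. g x) * (cmod (u 0))\<^sup>2 + 2 * (LINT x|lborel. \<bar>x\<bar> * g x) * energy d"
    unfolding majorant_def using g_int xg_int by simp
  finally show "(LINT x|lborel. g x * (cmod (u x))\<^sup>2)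
      \<le> 2 * (LINT x|lborel. g x) * (cmod (u 0))\<^sup>2 + 2 * (LINT x|lborel. \<bar>x\<bar> * g x) * energy d" .
qed

lemma sq_norm_le_weighted_on_interval:
  fixes g :: "real \<Rightarrow> real" and A m :: real
  assumes [measurable]: "g \<in> borel_measurable borel" and g_nonneg: "\<And>x. 0 \<le> g x"
    and g_int: "integrable lborel g" and gu_int: "integrable lborel (\<lambda>x. g x * (cmod (u x))\<^sup>2)"
    and A: "0 < A" and m: "0 < m" "\<And>y. y \<in> {-A..A} \<Longrightarrow> m \<le> g y"
    and x: "x \<in> {-A..A}"
  shows "(cmod (u x))\<^sup>2
      \<le> (LINT y|lborel. g y * (cmod (u y))\<^sup>2) / (A * m) + 2 * (LINT y|lborel. g y) * energy d / m"
proof -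
  define G where "G = (LINT y|lborel. g y * (cmod (u y))\<^sup>2)"
  define c where "c = (LINT y|lborel. g y)"
  define majorant where "majorant y = 2 * (g y * (cmod (u y))\<^sup>2) + 4 * A * energy d * g y" for y
  have majorant_int: "integrable lborel majorant"
    unfolding majorant_def using gu_int g_int by simp
  have majorant_nonneg: "0 \<le> majorant y" for y
    unfolding majorant_def using g_nonneg[of y] energy_nonneg[of d] A by simp
  have le: "indicator {-A..A} y * (m * (cmod (u x))\<^sup>2) \<le> majorant y" for y
  proof (cases "y \<in> {-A..A}")
    case True
    have "m * (cmod (u x))\<^sup>2 \<le> g y * (cmod (u x))\<^sup>2"
      using m True by (intro mult_right_mono) auto
    also have "\<dots> \<le> g y * (2 * (cmod (u y))\<^sup>2 + 2 * (2 * A) * energy d)"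
    proof (rule mult_left_mono)
      have "\<bar>x - y\<bar> * energy d \<le> (2 * A) * energy d"
        using x True energy_nonneg[of d] by (intro mult_right_mono) auto
      then show "(cmod (u x))\<^sup>2 \<le> 2 * (cmod (u y))\<^sup>2 + 2 * (2 * A) * energy d"
        using sq_norm_le_shifted[of x y] by simp
    qed (rule g_nonneg)
    finally show ?thesis
      using True unfolding majorant_def by (simp add: algebra_simps)
  qed (simp add: majorant_nonneg)
  have "2 * A * (m * (cmod (u x))\<^sup>2) = (LINT y|lborel. indicator {-A..A} y * (m * (cmod (u x))\<^sup>2))"
    using A by simp
  also have "\<dots> \<le> (LINT y|lborel. majorant y)"
    using le majorant_nonneg by (intro integral_mono'[OF majorant_int]) auto
  also have "\<dots> = 2 * G + 4 * A * energy d * c"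
    unfolding majorant_def G_def c_def using gu_int g_int by simp
  finally have "(cmod (u x))\<^sup>2 * (A * m) \<le> G + 2 * A * energy d * c"
    by (simp add: algebra_simps)
  then have "(cmod (u x))\<^sup>2 \<le> (G + 2 * A * energy d * c) / (A * m)"
    using A m by (simp add: pos_le_divide_eq)
  also have "\<dots> = G / (A * m) + 2 * c * energy d / m"
    using A m by (simp add: field_simps)
  finally show ?thesis
    unfolding G_def c_def .
qed

end

section \<open>Comparison of the metrics\<close>

lemma XR_wderiv:
  assumes "v \<in> XR r0"
  shows "has_weak_deriv v (wderiv v)" and "wderiv v \<in> borel_measurable lborel"
    and "integrable lborel (\<lambda>x. (cmod (wderiv v x))\<^sup>2)"
proof -
  have "\<exists>v'. has_weak_deriv v v' \<and> v' \<in> borel_measurable lborel \<and>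
      integrable lborel (\<lambda>x. (cmod (v' x))\<^sup>2)"
    using assms unfolding XR_def by blast
  from someI_ex[OF this] show "has_weak_deriv v (wderiv v)" "wderiv v \<in> borel_measurable lborel"
    "integrable lborel (\<lambda>x. (cmod (wderiv v x))\<^sup>2)"
    unfolding wderiv_def by auto
qed

lemma square_integrable_diff:
  fixes f g :: "'a \<Rightarrow> 'b::{real_normed_vector, second_countable_topology}"
  assumes [measurable]: "f \<in> borel_measurable M" "g \<in> borel_measurable M"
    and "integrable M (\<lambda>x. (norm (f x))\<^sup>2)" "integrable M (\<lambda>x. (norm (g x))\<^sup>2)"
  shows "integrable M (\<lambda>x. (norm (f x - g x))\<^sup>2)"
proof (rule Bochner_Integration.integrable_bound)
  show "integrable M (\<lambda>x. 2 * (norm (f x))\<^sup>2 + 2 * (norm (g x))\<^sup>2)"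
    using assms by auto
  have "(norm (f x - g x))\<^sup>2 \<le> 2 * (norm (f x))\<^sup>2 + 2 * (norm (g x))\<^sup>2" for x
  proof -
    have "(norm (f x - g x))\<^sup>2 \<le> (norm (f x) + norm (g x))\<^sup>2"
      by (intro power_mono norm_triangle_ineq4) simp
    also have "\<dots> \<le> 2 * (norm (f x))\<^sup>2 + 2 * (norm (g x))\<^sup>2"
      using sum_squares_bound[of "norm (f x)" "norm (g x)"] by (simp add: power2_sum)
    finally show ?thesis .
  qed
  then show "AE x in M. norm ((norm (f x - g x))\<^sup>2) \<le> norm (2 * (norm (f x))\<^sup>2 + 2 * (norm (g x))\<^sup>2)"
    by simp
qed measurable

lemma Delta_nonneg: "0 \<le> Delta v w"
  unfolding Delta_def by (intro add_nonneg_nonneg integral_nonneg_AE) auto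

lemma energy_wderiv_diff_le_Delta: "energy (\<lambda>x. wderiv v x - wderiv w x) \<le> Delta v w"
  unfolding Delta_def energy_def by (simp add: integral_nonneg_AE)

lemma sqrt_comparison_chain:
  fixes D a s G K :: real
  assumes "0 \<le> D" "0 \<le> a" "a \<le> s" "1 \<le> K"
    and upper: "D + G \<le> K * (D + a)" and lower: "D + s \<le> K * (D + G)"
  shows "sqrt (D + G) / K \<le> sqrt (D + a)"
    and "sqrt (D + a) \<le> K * sqrt (D + s)"
    and "K * sqrt (D + s) \<le> K\<^sup>2 * sqrt (D + G)"
proof -
  have sqrt_K: "sqrt K \<le> K"
    using \<open>1 \<le> K\<close> by (intro real_le_lsqrt) (auto simp: power2_eq_square)
  have "sqrt (D + G) \<le> sqrt K * sqrt (D + a)"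
    using upper by (simp add: real_sqrt_mult[symmetric])
  also have "\<dots> \<le> K * sqrt (D + a)"
    using sqrt_K assms by (intro mult_right_mono) auto
  finally show "sqrt (D + G) / K \<le> sqrt (D + a)"
    using \<open>1 \<le> K\<close> by (simp add: divide_le_eq mult.commute)
  show "sqrt (D + a) \<le> K * sqrt (D + s)"
  proof -
    have "sqrt (D + a) \<le> sqrt (D + s)"
      using assms by simp
    also have "\<dots> \<le> K * sqrt (D + s)"
      using assms by (simp add: mult_le_cancel_right1)
    finally show ?thesis .
  qed
  have "0 \<le> D + G"
  proof -
    have "0 \<le> K * (D + G)"
      using assms lower by linarith
    then show ?thesis
      using \<open>1 \<le> K\<close> by (simp add: zero_le_mult_iff)
  qed
  have "sqrt (D + s) \<le> sqrt K * sqrt (D + G)"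
    using lower by (simp add: real_sqrt_mult[symmetric])
  also have "\<dots> \<le> K * sqrt (D + G)"
    using sqrt_K \<open>0 \<le> D + G\<close> by (intro mult_right_mono) auto
  finally show "K * sqrt (D + s) \<le> K\<^sup>2 * sqrt (D + G)"
    using \<open>1 \<le> K\<close> by (simp add: power2_eq_square mult.assoc)
qed

context
  fixes r0 :: real and v w :: "real \<Rightarrow> complex"
  assumes v: "v \<in> XR r0" and w: "w \<in> XR r0"
begin

lemma XR_diff_L2_weak_deriv:
  shows "has_weak_deriv (\<lambda>x. v x - w x) (\<lambda>x. wderiv v x - wderiv w x)"
    and "(\<lambda>x. wderiv v x - wderiv w x) \<in> borel_measurable lborel"
    and "integrable lborel (\<lambda>x. (cmod (wderiv v x - wderiv w x))\<^sup>2)"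
  using XR_wderiv[OF v] XR_wderiv[OF w]
  by (simp_all add: has_weak_deriv_diff square_integrable_diff)

(* Needed because SUP of a set that is not bounded above is an unspecified real. *)
lemma XR_diff_bdd_above: "bdd_above (range (\<lambda>x. (cmod (v x - w x))\<^sup>2))"
proof -
  obtain B\<^sub>v B\<^sub>w where "\<forall>x. cmod (v x) \<le> B\<^sub>v" "\<forall>x. cmod (w x) \<le> B\<^sub>w"
    using bounded_if_potential_integrable[OF XR_wderiv[OF v]]
      bounded_if_potential_integrable[OF XR_wderiv[OF w]]
      v w unfolding XR_def by blast
  then have "(cmod (v x - w x))\<^sup>2 \<le> (B\<^sub>v + B\<^sub>w)\<^sup>2" for x
    by (intro power_mono order_trans[OF norm_triangle_ineq4] add_mono) auto
  then show ?thesis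
    by (intro bdd_aboveI2) auto
qed

lemma dX_le_dinf: "dX v w \<le> dinf v w"
  unfolding dX_def dinf_def
  using cSUP_upper[OF UNIV_I XR_diff_bdd_above, of 0] by simp

lemma XR_weighted_dist_le:
  fixes g :: "real \<Rightarrow> real"
  assumes [measurable]: "g \<in> borel_measurable borel" and g_nonneg: "\<And>x. 0 \<le> g x"
    and g_int: "integrable lborel g" and xg_int: "integrable lborel (\<lambda>x. \<bar>x\<bar> * g x)"
  shows "integrable lborel (\<lambda>x. g x * (cmod (v x - w x))\<^sup>2)"
    and "(LINT x|lborel. g x * (cmod (v x - w x))\<^sup>2)
      \<le> 2 * (LINT x|lborel. g x) * (cmod (v 0 - w 0))\<^sup>2 + 2 * (LINT x|lborel. \<bar>x\<bar> * g x) * Delta v w"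
proof -
  note estimate = weighted_sq_integral_le[OF XR_diff_L2_weak_deriv assms]
  show "integrable lborel (\<lambda>x. g x * (cmod (v x - w x))\<^sup>2)"
    by (rule estimate(1))
  have "0 \<le> (LINT x|lborel. \<bar>x\<bar> * g x)"
    using g_nonneg by (intro integral_nonneg_AE) auto
  then have "(LINT x|lborel. \<bar>x\<bar> * g x) * energy (\<lambda>x. wderiv v x - wderiv w x)
      \<le> (LINT x|lborel. \<bar>x\<bar> * g x) * Delta v w"
    by (intro mult_left_mono energy_wderiv_diff_le_Delta)
  then show "(LINT x|lborel. g x * (cmod (v x - w x))\<^sup>2)
      \<le> 2 * (LINT x|lborel. g x) * (cmod (v 0 - w 0))\<^sup>2 + 2 * (LINT x|lborel. \<bar>x\<bar> * g x) * Delta v w"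
    using estimate(2) by simp
qed

lemma XR_SUP_dist_le:
  fixes g :: "real \<Rightarrow> real" and A m :: real
  assumes [measurable]: "g \<in> borel_measurable borel" and g_nonneg: "\<And>x. 0 \<le> g x"
    and g_int: "integrable lborel g" and xg_int: "integrable lborel (\<lambda>x. \<bar>x\<bar> * g x)"
    and A: "0 < A" and m: "0 < m" "\<And>y. y \<in> {-A..A} \<Longrightarrow> m \<le> g y"
  shows "(SUP x\<in>{-A..A}. (cmod (v x - w x))\<^sup>2)
      \<le> (LINT x|lborel. g x * (cmod (v x - w x))\<^sup>2) / (A * m) + 2 * (LINT x|lborel. g x) * Delta v w / m"
    and "(cmod (v 0 - w 0))\<^sup>2 \<le> (SUP x\<in>{-A..A}. (cmod (v x - w x))\<^sup>2)"
proof -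
  have "0 \<le> (LINT x|lborel. g x)"
    using g_nonneg by (intro integral_nonneg_AE) auto
  then have "2 * (LINT x|lborel. g x) * energy (\<lambda>x. wderiv v x - wderiv w x) / m
      \<le> 2 * (LINT x|lborel. g x) * Delta v w / m"
    using m by (intro divide_right_mono mult_left_mono energy_wderiv_diff_le_Delta) auto
  then have bound: "(cmod (v x - w x))\<^sup>2
      \<le> (LINT x|lborel. g x * (cmod (v x - w x))\<^sup>2) / (A * m) + 2 * (LINT x|lborel. g x) * Delta v w / m"
    if "x \<in> {-A..A}" for x
    using sq_norm_le_weighted_on_interval[OF XR_diff_L2_weak_deriv assms(1,2,3)
        XR_weighted_dist_le(1)[OF assms(1-4)] A m that] by simp
  then show "(SUP x\<in>{-A..A}. (cmod (v x - w x))\<^sup>2)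
      \<le> (LINT x|lborel. g x * (cmod (v x - w x))\<^sup>2) / (A * m) + 2 * (LINT x|lborel. g x) * Delta v w / m"
    using A by (intro cSUP_least) auto
  show "(cmod (v 0 - w 0))\<^sup>2 \<le> (SUP x\<in>{-A..A}. (cmod (v x - w x))\<^sup>2)"
    using bound A by (intro cSUP_upper bdd_aboveI2) auto
qed

lemma XR_dist_comparison:
  fixes g :: "real \<Rightarrow> real" and A m K :: real
  assumes g_meas: "g \<in> borel_measurable borel" and g_nonneg: "\<And>x. 0 \<le> g x"
    and g_int: "integrable lborel g" and xg_int: "integrable lborel (\<lambda>x. \<bar>x\<bar> * g x)"
    and A: "0 < A" and m: "0 < m" "\<And>y. y \<in> {-A..A} \<Longrightarrow> m \<le> g y"
    and K: "1 + 2 * (LINT x|lborel. \<bar>x\<bar> * g x) \<le> K" "2 * (LINT x|lborel. g x) \<le> K"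
      "1 + 2 * (LINT x|lborel. g x) / m \<le> K" "1 / (A * m) \<le> K" "1 \<le> K"
  shows "dg g v w / K \<le> dX v w \<and> dX v w \<le> K * dA A v w \<and> K * dA A v w \<le> K\<^sup>2 * dg g v w"
proof -
  define D where "D = Delta v w"
  define a where "a = (cmod (v 0 - w 0))\<^sup>2"
  define s where "s = (SUP x\<in>{-A..A}. (cmod (v x - w x))\<^sup>2)"
  define G where "G = (LINT x|lborel. g x * (cmod (v x - w x))\<^sup>2)"
  have D: "0 \<le> D"
    unfolding D_def by (rule Delta_nonneg)
  have G: "0 \<le> G"
    unfolding G_def using g_nonneg by (intro integral_nonneg_AE) auto
  note SUP = XR_SUP_dist_le[OF g_meas g_nonneg g_int xg_int A m]
  have "D + G \<le> (1 + 2 * (LINT x|lborel. \<bar>x\<bar> * g x)) * D + 2 * (LINT x|lborel. g x) * a"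
    using XR_weighted_dist_le(2)[OF g_meas g_nonneg g_int xg_int]
    unfolding D_def G_def a_def by (simp add: algebra_simps)
  also have "\<dots> \<le> K * D + K * a"
    using K D by (intro add_mono mult_right_mono) (auto simp: a_def)
  finally have upper: "D + G \<le> K * (D + a)"
    by (simp add: algebra_simps)
  have "D + s \<le> (1 + 2 * (LINT x|lborel. g x) / m) * D + 1 / (A * m) * G"
    using SUP(1) unfolding D_def G_def s_def by (simp add: algebra_simps)
  also have "\<dots> \<le> K * D + K * G"
    using K D G by (intro add_mono mult_right_mono) auto
  finally have lower: "D + s \<le> K * (D + G)"
    by (simp add: algebra_simps)
  have "a \<le> s"
    using SUP(2) unfolding a_def s_def .
  from sqrt_comparison_chain[OF D _ this K(5) upper lower] show ?thesis
    unfolding dX_def dA_def dg_def D_def a_def s_def G_def by auto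
qed

end

lemma dX_dA_dg_equivalent:
  fixes A :: real and g :: "real \<Rightarrow> real"
  assumes A: "0 < A" and g_cont: "continuous_on UNIV g" and g_pos: "\<And>x. 0 < g x"
    and g_int: "integrable lborel (\<lambda>x. (1 + \<bar>x\<bar>) * g x)"
  shows "\<exists>K>1. \<forall>v\<in>XR r0. \<forall>w\<in>XR r0.
    dg g v w / K \<le> dX v w \<and> dX v w \<le> K * dA A v w \<and> K * dA A v w \<le> K\<^sup>2 * dg g v w"
proof -
  have g_meas [measurable]: "g \<in> borel_measurable borel"
    using g_cont by (rule borel_measurable_continuous_onI)
  have g_nonneg: "0 \<le> g x" for x
    using g_pos[of x] by simp
  have g_int': "integrable lborel g" and xg_int: "integrable lborel (\<lambda>x. \<bar>x\<bar> * g x)"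
    using g_nonneg
    by (auto intro!: Bochner_Integration.integrable_bound[OF g_int] AE_I2 simp: abs_mult algebra_simps)
  obtain x\<^sub>0 where "x\<^sub>0 \<in> {-A..A}" and x\<^sub>0_min: "\<And>y. y \<in> {-A..A} \<Longrightarrow> g x\<^sub>0 \<le> g y"
    using continuous_attains_inf[of "{-A..A}" g] A continuous_on_subset[OF g_cont] by force
  define m where "m = g x\<^sub>0"
  have m: "0 < m" "\<And>y. y \<in> {-A..A} \<Longrightarrow> m \<le> g y"
    unfolding m_def using g_pos x\<^sub>0_min by auto
  define c\<^sub>1 where "c\<^sub>1 = (LINT x|lborel. g x)"
  define c\<^sub>2 where "c\<^sub>2 = (LINT x|lborel. \<bar>x\<bar> * g x)"
  have "0 \<le> c\<^sub>1" "0 \<le> c\<^sub>2"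
    unfolding c\<^sub>1_def c\<^sub>2_def using g_nonneg by (auto intro!: integral_nonneg_AE)
  moreover have "0 \<le> 2 * c\<^sub>1 / m" "0 < 1 / (A * m)"
    using \<open>0 \<le> c\<^sub>1\<close> m A by auto
  moreover define K where "K = 1 + 2 * c\<^sub>1 + 2 * c\<^sub>2 + 2 * c\<^sub>1 / m + 1 / (A * m)"
  ultimately have K: "1 + 2 * c\<^sub>2 \<le> K" "2 * c\<^sub>1 \<le> K" "1 + 2 * c\<^sub>1 / m \<le> K" "1 / (A * m) \<le> K" "1 < K"
    by linarith+
  show ?thesis
    using XR_dist_comparison[OF _ _ g_meas g_nonneg g_int' xg_int A m K(1-4)[unfolded c\<^sub>1_def c\<^sub>2_def]] K(5)
    by (intro exI[of _ K]) auto
qed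

section \<open>The counterexample\<close>

definition chi_deriv :: "real \<Rightarrow> real" where
  "chi_deriv t = indicator {-1<..<0} t - indicator {0<..<1} t"

lemma continuous_on_chi [continuous_intros]:
  "continuous_on S f \<Longrightarrow> continuous_on S (\<lambda>x. chi (f x))"
  unfolding chi_def by (intro continuous_intros)

lemma chi_has_real_derivative:
  assumes "t \<notin> {-1, 0, 1}"
  shows "(chi has_real_derivative chi_deriv t) (at t)"
proof -
  have locally_affine: "(chi has_real_derivative \<beta>) (at t)"
    if "open S" "t \<in> S" "\<And>s. s \<in> S \<Longrightarrow> chi s = \<alpha> + \<beta> * s" for S \<alpha> \<beta>
    by (rule has_field_derivative_transform_within_open[of "\<lambda>s. \<alpha> + \<beta> * s", OF _ that(1,2)])
       (auto intro!: derivative_eq_intros simp: that(3))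
  consider "t < -1" | "-1 < t" "t < 0" | "0 < t" "t < 1" | "1 < t"
    using assms by fastforce
  then show ?thesis
  proof cases
    case 1
    then show ?thesis
      by (auto simp: chi_deriv_def chi_def intro!: locally_affine[of "{..<-1}" 0])
  next
    case 2
    then show ?thesis
      by (auto simp: chi_deriv_def chi_def intro!: locally_affine[of "{-1<..<0}" 1])
  next
    case 3
    then show ?thesis
      by (auto simp: chi_deriv_def chi_def intro!: locally_affine[of "{0<..<1}" 1])
  next
    case 4
    then show ?thesis
      by (auto simp: chi_deriv_def chi_def intro!: locally_affine[of "{1<..}" 0])
  qed
qed

lemma has_vector_derivative_cis:
  assumes "(f has_real_derivative f') (at x)"
  shows "((\<lambda>x. cis (f x)) has_vector_derivative (of_real f' * \<i> * cis (f x))) (at x)"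
  using has_derivative_cis[OF assms[unfolded has_field_derivative_def]]
  by (simp add: has_vector_derivative_def scaleR_conv_of_real mult.assoc mult.left_commute)

definition chi_wave :: "real \<Rightarrow> real \<Rightarrow> complex" where
  "chi_wave N x = cis (chi (N + x / N))"

definition chi_wave_deriv :: "real \<Rightarrow> real \<Rightarrow> complex" where
  "chi_wave_deriv N x = of_real (chi_deriv (N + x / N) / N) * \<i> * cis (chi (N + x / N))"

lemma continuous_on_chi_wave: "continuous_on S (chi_wave N)"
  unfolding chi_wave_def[abs_def]
  by (cases "N = 0") (auto intro!: continuous_intros)

lemma borel_measurable_chi_wave_deriv [measurable]: "chi_wave_deriv N \<in> borel_measurable borel"
proof -
  have "chi_wave N \<in> borel_measurable borel"
    by (intro borel_measurable_continuous_onI continuous_on_chi_wave)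
  then have [measurable]: "(\<lambda>x. cis (chi (N + x / N))) \<in> borel_measurable borel"
    unfolding chi_wave_def[abs_def] .
  show ?thesis
    unfolding chi_wave_deriv_def[abs_def] chi_deriv_def[abs_def] by measurable
qed

lemma chi_wave_has_vector_derivative:
  assumes "N \<noteq> 0" and "x \<notin> (\<lambda>t. N * (t - N)) ` {-1, 0, 1}"
  shows "(chi_wave N has_vector_derivative chi_wave_deriv N x) (at x)"
proof -
  have "N + x / N \<notin> {-1, 0, 1}"
  proof
    assume "N + x / N \<in> {-1, 0, 1}"
    moreover have "x = N * ((N + x / N) - N)"
      using assms(1) by simp
    ultimately show False
      using assms(2) by blast
  qed
  then have "((\<lambda>x. chi (N + x / N)) has_real_derivative chi_deriv (N + x / N) * (1 / N)) (at x)"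
    by (intro DERIV_chain2[OF chi_has_real_derivative]) (auto intro!: derivative_eq_intros)
  from has_vector_derivative_cis[OF this] show ?thesis
    unfolding chi_wave_def[abs_def] chi_wave_deriv_def by simp
qed

lemma chi_wave_weak_deriv:
  assumes "0 < N"
  shows "has_weak_deriv (chi_wave N) (chi_wave_deriv N)"
  unfolding has_weak_deriv_def
proof (intro allI impI conjI)
  fix a b :: real assume "a \<le> b"
  have "norm (chi_wave_deriv N x) \<le> 1 / N" for x
    using assms by (auto simp: chi_wave_deriv_def chi_deriv_def indicator_def norm_mult norm_divide)
  then show int: "set_integrable lborel {a..b} (chi_wave_deriv N)"
    unfolding set_integrable_def
    by (intro integrableI_bounded_set[where A="{a..b}" and B="1 / N"])
       (auto simp: emeasure_lborel_Icc_eq indicator_def)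
  have "(chi_wave_deriv N has_integral (chi_wave N b - chi_wave N a)) {a..b}"
  proof (rule fundamental_theorem_of_calculus_interior_strong[where S="(\<lambda>t. N * (t - N)) ` {-1, 0, 1}"])
    show "continuous_on {a..b} (chi_wave N)"
      by (rule continuous_on_chi_wave)
  qed (use \<open>a \<le> b\<close> assms in \<open>auto intro!: chi_wave_has_vector_derivative\<close>)
  then show "chi_wave N b - chi_wave N a = (LINT x:{a..b}|lborel. chi_wave_deriv N x)"
    using set_borel_integral_eq_integral(2)[OF int] by (simp add: integral_unique)
qed

lemma chi_wave_deriv_energy:
  assumes "0 < N"
  shows "integrable lborel (\<lambda>x. (cmod (chi_wave_deriv N x))\<^sup>2)"
    and "energy (chi_wave_deriv N) = 2 / N"
proof -
  define f :: "real \<Rightarrow> real" where "f t = indicator {-1<..<0} t + indicator {0<..<1} t" for t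
  have f_int: "integrable lborel f"
    unfolding f_def[abs_def] by (simp add: integrable_indicator_iff)
  have "(LINT t|lborel. f t) = 2"
    unfolding f_def by (simp add: integrable_indicator_iff)
  have sq: "(cmod (chi_wave_deriv N x))\<^sup>2 = f (N + (1 / N) * x) / N\<^sup>2" for x
    by (auto simp: chi_wave_deriv_def chi_deriv_def f_def indicator_def norm_mult norm_divide
        power_divide)
  show "integrable lborel (\<lambda>x. (cmod (chi_wave_deriv N x))\<^sup>2)"
    unfolding sq using lborel_integrable_real_affine[OF f_int, of "1 / N" N] assms by simp
  have "(LINT t|lborel. f t) = (1 / N) * (LINT x|lborel. f (N + (1 / N) * x))"
    using lborel_integral_real_affine[of "1 / N" f N] assms by simp
  then show "energy (chi_wave_deriv N) = 2 / N"
    unfolding energy_def sq using \<open>(LINT t|lborel. f t) = 2\<close> assms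
    by (simp add: power2_eq_square field_simps)
qed

lemma const_in_XR: "cmod c = 1 \<Longrightarrow> (\<lambda>_. c) \<in> XR 1"
  unfolding XR_def using has_weak_deriv_const[of c] by auto

lemma chi_wave_in_XR:
  assumes "0 \<le> N"
  shows "chi_wave N \<in> XR 1"
proof (cases "N = 0")
  case True
  \<comment> \<open>\<open>x / 0 = 0\<close> makes \<open>chi_wave 0\<close> constant.\<close>
  then have "chi_wave N = (\<lambda>_. cis 1)"
    by (simp add: chi_wave_def chi_def fun_eq_iff)
  then show ?thesis
    by (simp add: const_in_XR)
next
  case False
  then have "0 < N"
    using assms by simp
  moreover have "(cmod (chi_wave N x))\<^sup>2 = 1" for x
    by (simp add: chi_wave_def)
  ultimately show ?thesis
    unfolding XR_def
    by (intro CollectI exI[of _ "chi_wave_deriv N"])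
       (simp add: chi_wave_weak_deriv chi_wave_deriv_energy(1))
qed

lemma Delta_chi_wave:
  assumes "0 < N"
  shows "Delta (chi_wave N) (\<lambda>_. 1) = 2 / N"
proof -
  \<comment> \<open>\<open>wderiv\<close> is an arbitrary weak derivative, determined only almost everywhere.\<close>
  have "AE x in lborel. wderiv (chi_wave N) x = chi_wave_deriv N x"
    using XR_wderiv(1)[OF chi_wave_in_XR] chi_wave_weak_deriv assms
    by (intro has_weak_deriv_unique) auto
  moreover have "AE x in lborel. wderiv (\<lambda>_. 1) x = 0"
    using XR_wderiv(1)[OF const_in_XR[of 1]] has_weak_deriv_const[of 1]
    by (intro has_weak_deriv_unique) auto
  moreover note [measurable] = XR_wderiv(2)[OF chi_wave_in_XR] XR_wderiv(2)[OF const_in_XR[of 1]]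
  ultimately have "energy (\<lambda>x. wderiv (chi_wave N) x - wderiv (\<lambda>_. 1) x) = energy (chi_wave_deriv N)"
    unfolding energy_def using assms by (intro integral_cong_AE) (auto elim: AE_mp)
  then show ?thesis
    unfolding Delta_def energy_def[symmetric]
    using chi_wave_deriv_energy(2)[OF assms] by (simp add: chi_wave_def)
qed

lemma norm_cis_minus_1_sq: "(cmod (cis t - 1))\<^sup>2 = 2 - 2 * cos t"
proof -
  have "(cmod (cis t - 1))\<^sup>2 = (cos t - 1)\<^sup>2 + (sin t)\<^sup>2"
    by (simp add: cmod_power2)
  also have "\<dots> = 2 - 2 * cos t"
    using sin_cos_squared_add[of t] by (simp add: power2_eq_square algebra_simps)
  finally show ?thesis .
qed

lemma SUP_chi_wave_dist:
  assumes "0 < N"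
  shows "(SUP x. (cmod (chi_wave N x - 1))\<^sup>2) = (cmod (cis 1 - 1))\<^sup>2"
proof (rule antisym)
  have le: "(cmod (chi_wave N x - 1))\<^sup>2 \<le> (cmod (cis 1 - 1))\<^sup>2" for x
  proof -
    have "0 \<le> chi (N + x / N)" "chi (N + x / N) \<le> 1"
      by (auto simp: chi_def)
    then have "cos 1 \<le> cos (chi (N + x / N))"
      using pi_gt3 by (intro cos_monotone_0_pi_le) auto
    then show ?thesis
      unfolding chi_wave_def norm_cis_minus_1_sq by simp
  qed
  then show "(SUP x. (cmod (chi_wave N x - 1))\<^sup>2) \<le> (cmod (cis 1 - 1))\<^sup>2"
    by (intro cSUP_least) auto
  have "chi_wave N (- N\<^sup>2) = cis 1"
    using assms by (simp add: chi_wave_def chi_def power2_eq_square)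
  then show "(cmod (cis 1 - 1))\<^sup>2 \<le> (SUP x. (cmod (chi_wave N x - 1))\<^sup>2)"
    using le by (intro cSUP_upper2[where x="- N\<^sup>2"] bdd_aboveI2[where M="(cmod (cis 1 - 1))\<^sup>2"]) auto
qed

lemma cis_1_neq_1: "cis 1 \<noteq> 1"
proof
  assume "cis 1 = 1"
  then have "sin (1::real) = 0"
    by (simp add: complex_eq_iff)
  moreover have "0 < sin (1::real)"
    using pi_gt3 by (intro sin_gt_zero) auto
  ultimately show False
    by simp
qed

lemma chi_wave_dist_limits:
  shows "(\<lambda>n. dX (chi_wave (real n)) (\<lambda>_. 1)) \<longlonglongrightarrow> 0"
    and "(\<lambda>n. dinf (chi_wave (real n)) (\<lambda>_. 1)) \<longlonglongrightarrow> cmod (cis 1 - 1)"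
proof -
  have "chi_wave (real n) 0 = 1" if "1 \<le> n" for n
    using that by (simp add: chi_wave_def chi_def)
  then have "\<forall>\<^sub>F n in sequentially. sqrt (2 / real n) = dX (chi_wave (real n)) (\<lambda>_. 1)"
    by (intro eventually_sequentiallyI[of 1]) (simp add: dX_def Delta_chi_wave)
  moreover have "(\<lambda>n. sqrt (2 / real n)) \<longlonglongrightarrow> sqrt 0"
    by (intro tendsto_intros lim_const_over_n)
  ultimately show "(\<lambda>n. dX (chi_wave (real n)) (\<lambda>_. 1)) \<longlonglongrightarrow> 0"
    by (simp add: tendsto_cong)
  have "\<forall>\<^sub>F n in sequentially.
      sqrt (2 / real n + (cmod (cis 1 - 1))\<^sup>2) = dinf (chi_wave (real n)) (\<lambda>_. 1)"
    by (intro eventually_sequentiallyI[of 1]) (simp add: dinf_def Delta_chi_wave SUP_chi_wave_dist)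
  moreover have "(\<lambda>n. sqrt (2 / real n + (cmod (cis 1 - 1))\<^sup>2)) \<longlonglongrightarrow> sqrt (0 + (cmod (cis 1 - 1))\<^sup>2)"
    by (intro tendsto_intros lim_const_over_n)
  ultimately show "(\<lambda>n. dinf (chi_wave (real n)) (\<lambda>_. 1)) \<longlonglongrightarrow> cmod (cis 1 - 1)"
    by (simp add: tendsto_cong)
qed

lemma dinf_not_dominated_by_dX: "\<not> (\<exists>C. \<forall>v\<in>XR 1. \<forall>w\<in>XR 1. dinf v w \<le> C * dX v w)"
proof
  assume "\<exists>C. \<forall>v\<in>XR 1. \<forall>w\<in>XR 1. dinf v w \<le> C * dX v w"
  then obtain C where C: "\<forall>v\<in>XR 1. \<forall>w\<in>XR 1. dinf v w \<le> C * dX v w"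
    by blast
  have "(\<lambda>n. C * dX (chi_wave (real n)) (\<lambda>_. 1)) \<longlonglongrightarrow> C * 0"
    by (intro tendsto_intros chi_wave_dist_limits)
  then have "cmod (cis 1 - 1) \<le> C * 0"
    using C chi_wave_in_XR const_in_XR[of 1]
    by (intro LIMSEQ_le[OF chi_wave_dist_limits(2)]) auto
  then show False
    using cis_1_neq_1 by simp
qed

theorem propositionA2:
  fixes r0 A :: real and g :: "real \<Rightarrow> real"
  assumes r0: "r0 > 0" and A: "A > 0"
    and g_cont: "continuous_on UNIV g"
    and g_bdd: "bounded (range g)"
    and g_pos: "\<forall>x. g x > 0"
    and g_int: "integrable lborel (\<lambda>x. (1 + \<bar>x\<bar>) * g x)"
  shows "(\<exists>K>1. \<forall>v\<in>XR r0. \<forall>w\<in>XR r0.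
            dg g v w / K \<le> dX v w \<and> dX v w \<le> K * dA A v w \<and> K * dA A v w \<le> K\<^sup>2 * dg g v w)
       \<and> (\<forall>v\<in>XR r0. \<forall>w\<in>XR r0. dX v w \<le> dinf v w)
       \<and> (let vn = (\<lambda>(n::nat) x. cis (chi (real n + x / real n))) in
            (\<forall>n. vn n \<in> XR 1) \<and> (\<lambda>_. 1) \<in> XR 1
          \<and> (\<lambda>n. dX (vn n) (\<lambda>_. 1)) \<longlonglongrightarrow> 0
          \<and> (\<lambda>n. dinf (vn n) (\<lambda>_. 1)) \<longlonglongrightarrow> cmod (cis 1 - 1)
          \<and> cmod (cis 1 - 1) \<noteq> 0)
       \<and> \<not> (\<exists>C. \<forall>v\<in>XR 1. \<forall>w\<in>XR 1. dinf v w \<le> C * dX v w)"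
proof -
  have vn: "(\<lambda>(n::nat) x. cis (chi (real n + x / real n))) = (\<lambda>n. chi_wave (real n))"
    by (simp add: chi_wave_def fun_eq_iff)
  have equivalent: "\<exists>K>1. \<forall>v\<in>XR r0. \<forall>w\<in>XR r0.
      dg g v w / K \<le> dX v w \<and> dX v w \<le> K * dA A v w \<and> K * dA A v w \<le> K\<^sup>2 * dg g v w"
    using dX_dA_dg_equivalent[OF A g_cont _ g_int] g_pos by blast
  show ?thesis
    unfolding Let_def vn
    using equivalent dX_le_dinf chi_wave_in_XR const_in_XR[of 1] chi_wave_dist_limits
      cis_1_neq_1 dinf_not_dominated_by_dX
    by auto
qed

end
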